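(* For each $n \in \{94, 95, 96\}$ there exists a 4-regular matchstick graph with exactly $n$ vertices.
   Context: A matchstick graph is a finite graph drawn in the Euclidean plane such that vertices are distinct points, every edge is a straight line segment of length 1 between its endpoints, and edges do not cross or overlap (two edges intersect at most in a common endpoint). A matchstick graph is 4-regular if every vertex has degree exactly 4. *)

theory Defs
  imports "HOL-Analysis.Analysis"
begin

text \<open>Points of the Euclidean plane are modelled as elements of type complex.
A graph is a vertex set V and an edge set E whose elements are 2-element
subsets of V (simple undirected graph).\<close>

definition matchstick_graph :: "complex set \<Rightarrow> complex set set \<Rightarrow> bool" where
  "matchstick_graph V E \<longleftrightarrow>
     finite V \<and>
     (\<forall>e\<in>E. \<exists>a b. e = {a, b} \<and> a \<in> V \<and> b \<in> V \<and> a \<noteq> b \<and> dist a b = 1) \<and>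
     (\<forall>a b c d. {a, b} \<in> E \<longrightarrow> {c, d} \<in> E \<longrightarrow> {a, b} \<noteq> {c, d} \<longrightarrow>
        closed_segment a b \<inter> closed_segment c d \<subseteq> {a, b} \<inter> {c, d})"

definition degree :: "complex set set \<Rightarrow> complex \<Rightarrow> nat" where
  "degree E v = card {e \<in> E. v \<in> e}"

definition four_regular_matchstick_graph :: "complex set \<Rightarrow> complex set set \<Rightarrow> bool" where
  "four_regular_matchstick_graph V E \<longleftrightarrow>
     matchstick_graph V E \<and> (\<forall>v\<in>V. degree E v = 4)"

end

theory Submission
  imports Defs "HOL-Computational_Algebra.Primes"
begin

text \<open>The three graphs are given by explicit coordinates of the form \<open>(a + b \<surd>3) / 10\<close> with
  integers \<open>a\<close>, \<open>b\<close>, so that every requirement reduces to exact arithmetic in \<open>\<int>[\<surd>3]\<close>. Two edges with a common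
  endpoint meet only there, because they have the same length. Two edges without a common
  endpoint are disjoint because a line strictly separates them: a line parallel to a coordinate
  axis, found with rational bounds for \<open>\<surd>3\<close>, or a line orthogonal to the normal or the direction
  of one of the edges, found from the sign of an element of \<open>\<int>[\<surd>3]\<close>.\<close>

section \<open>Segments in normed spaces\<close>

lemma closed_segments_disjoint_if_separated:
  fixes f :: "'a::real_vector \<Rightarrow> real"
  assumes "linear f" and "max (f a) (f b) < min (f c) (f d)"
  shows "closed_segment a b \<inter> closed_segment c d = {}"
proof -
  have image: "f z \<in> closed_segment (f x) (f y)" if "z \<in> closed_segment x y" for x y z
    using that closed_segment_linear_image [OF assms(1)] by blast
  have "f z \<le> max (f a) (f b)" if "z \<in> closed_segment a b" for z
    using image [OF that] by (auto simp: closed_segment_eq_real_ivl split: if_splits)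
  moreover have "min (f c) (f d) \<le> f z" if "z \<in> closed_segment c d" for z
    using image [OF that] by (auto simp: closed_segment_eq_real_ivl split: if_splits)
  ultimately show ?thesis
    using assms(2) by fastforce
qed

lemma closed_segment_inter_closed_segment_same_length:
  fixes a b d :: "'a::real_normed_vector"
  assumes "dist a b = dist a d" and "b \<noteq> d"
  shows "closed_segment a b \<inter> closed_segment a d \<subseteq> {a}"
proof
  fix z
  assume "z \<in> closed_segment a b \<inter> closed_segment a d"
  then obtain u v where u: "z = (1 - u) *\<^sub>R a + u *\<^sub>R b" "0 \<le> u"
    and v: "z = (1 - v) *\<^sub>R a + v *\<^sub>R d" "0 \<le> v"
    unfolding closed_segment_def by blast
  have zu: "z - a = u *\<^sub>R (b - a)"
    using u(1) by (simp add: algebra_simps)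
  have zv: "z - a = v *\<^sub>R (d - a)"
    using v(1) by (simp add: algebra_simps)
  have "dist a b \<noteq> 0"
    using assms by auto
  moreover have "u * dist a b = v * dist a d"
    using arg_cong [OF trans [OF zu [symmetric] zv], of norm] u(2) v(2)
    by (simp add: dist_norm norm_minus_commute)
  ultimately have "u = v"
    using assms(1) by simp
  with zu zv assms(2) show "z \<in> {a}"
    by (cases "u = 0") auto
qed

lemma closed_segments_inter_common_endpoint:
  fixes a b c d :: "'a::real_normed_vector"
  assumes "dist a b = dist c d" and "{a, b} \<inter> {c, d} \<noteq> {}" and "{a, b} \<noteq> {c, d}"
  shows "closed_segment a b \<inter> closed_segment c d \<subseteq> {a, b} \<inter> {c, d}"
  using assms closed_segment_inter_closed_segment_same_length [of a b d]
    closed_segment_inter_closed_segment_same_length [of a b c]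
    closed_segment_inter_closed_segment_same_length [of b a d]
    closed_segment_inter_closed_segment_same_length [of b a c]
  by (auto simp: closed_segment_commute dist_commute)

section \<open>Arithmetic in \<open>\<int>[\<surd>3]\<close>\<close>

type_synonym zsqrt3 = "int \<times> int"

definition real_of_zsqrt3 :: "zsqrt3 \<Rightarrow> real" where
  "real_of_zsqrt3 x = of_int (fst x) + of_int (snd x) * sqrt 3"

definition zsqrt3_add :: "zsqrt3 \<Rightarrow> zsqrt3 \<Rightarrow> zsqrt3" where
  "zsqrt3_add x y = (fst x + fst y, snd x + snd y)"

definition zsqrt3_diff :: "zsqrt3 \<Rightarrow> zsqrt3 \<Rightarrow> zsqrt3" where
  "zsqrt3_diff x y = (fst x - fst y, snd x - snd y)"

definition zsqrt3_mult :: "zsqrt3 \<Rightarrow> zsqrt3 \<Rightarrow> zsqrt3" where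
  "zsqrt3_mult x y = (fst x * fst y + 3 * (snd x * snd y), fst x * snd y + snd x * fst y)"

lemma real_of_zsqrt3_add [simp]:
  "real_of_zsqrt3 (zsqrt3_add x y) = real_of_zsqrt3 x + real_of_zsqrt3 y"
  by (simp add: real_of_zsqrt3_def zsqrt3_add_def algebra_simps)

lemma real_of_zsqrt3_diff [simp]:
  "real_of_zsqrt3 (zsqrt3_diff x y) = real_of_zsqrt3 x - real_of_zsqrt3 y"
  by (simp add: real_of_zsqrt3_def zsqrt3_diff_def algebra_simps)

lemma real_of_zsqrt3_mult [simp]:
  "real_of_zsqrt3 (zsqrt3_mult x y) = real_of_zsqrt3 x * real_of_zsqrt3 y"
proof -
  have "real_of_zsqrt3 x * real_of_zsqrt3 y
      = of_int (fst x * fst y) + of_int (snd x * snd y) * (sqrt 3 * sqrt 3)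
        + of_int (fst x * snd y + snd x * fst y) * sqrt 3"
    by (simp add: real_of_zsqrt3_def algebra_simps)
  then show ?thesis
    by (simp add: real_of_zsqrt3_def zsqrt3_mult_def)
qed

definition zsqrt3_pos :: "zsqrt3 \<Rightarrow> bool" where
  "zsqrt3_pos x = (case x of (p, q) \<Rightarrow>
     if 0 \<le> p then if 0 \<le> q then 0 < p \<or> 0 < q else 3 * (q * q) < p * p
     else 0 < q \<and> p * p < 3 * (q * q))"

lemma real_of_zsqrt3_of_int [simp]: "real_of_zsqrt3 (n, 0) = of_int n"
  by (simp add: real_of_zsqrt3_def)

lemma real_of_zsqrt3_pos:
  assumes "zsqrt3_pos x"
  shows "0 < real_of_zsqrt3 x"
proof -
  obtain p q where x: "x = (p, q)"
    by fastforce
  have sqrt3_q: "(sqrt 3 * of_int q)\<^sup>2 = (of_int (3 * (q * q)) :: real)"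
    by (simp add: power_mult_distrib power2_eq_square)
  consider "0 \<le> p" "0 \<le> q" "0 < p \<or> 0 < q" | "0 \<le> p" "q < 0" "3 * (q * q) < p * p"
    | "p < 0" "0 < q" "p * p < 3 * (q * q)"
    using assms by (auto simp: zsqrt3_pos_def x split: if_splits)
  then show ?thesis
  proof cases
    case 1
    then show ?thesis
      by (auto simp: real_of_zsqrt3_def x add_pos_nonneg add_nonneg_pos)
  next
    case 2
    have "(sqrt 3 * of_int (- q))\<^sup>2 = real_of_int (3 * (q * q))"
      using sqrt3_q by simp
    also have "\<dots> < real_of_int (p * p)"
      using 2 by (simp only: of_int_less_iff)
    finally have "(sqrt 3 * of_int (- q))\<^sup>2 < (of_int p)\<^sup>2"
      by (simp add: power2_eq_square)
    then have "sqrt 3 * of_int (- q) < of_int p"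
      by (rule power2_less_imp_less) (use 2 in simp)
    then show ?thesis
      by (simp add: real_of_zsqrt3_def x algebra_simps)
  next
    case 3
    have "(of_int (- p))\<^sup>2 = real_of_int (p * p)"
      by (simp add: power2_eq_square)
    also have "\<dots> < real_of_int (3 * (q * q))"
      using 3 by (simp only: of_int_less_iff)
    finally have "(of_int (- p))\<^sup>2 < (sqrt 3 * of_int q)\<^sup>2"
      using sqrt3_q by simp
    then have "of_int (- p) < sqrt 3 * of_int q"
      by (rule power2_less_imp_less) (use 3 in simp)
    then show ?thesis
      by (simp add: real_of_zsqrt3_def x algebra_simps)
  qed
qed

definition zsqrt3_lower :: "zsqrt3 \<Rightarrow> int" where
  "zsqrt3_lower x = 1000 * fst x + (if 0 \<le> snd x then 1732 else 1733) * snd x"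

definition zsqrt3_upper :: "zsqrt3 \<Rightarrow> int" where
  "zsqrt3_upper x = 1000 * fst x + (if 0 \<le> snd x then 1733 else 1732) * snd x"

lemma sqrt3_bounds: "1.732 \<le> sqrt (3::real)" "sqrt (3::real) \<le> 1.733"
proof -
  show "1.732 \<le> sqrt (3::real)"
    by (rule real_le_rsqrt) (simp add: power2_eq_square)
  have "sqrt (3::real) \<le> sqrt (1.733\<^sup>2)"
    by (rule real_sqrt_le_mono) (simp add: power2_eq_square)
  then show "sqrt (3::real) \<le> 1.733"
    by simp
qed

lemma zsqrt3_lower_le: "of_int (zsqrt3_lower x) \<le> 1000 * real_of_zsqrt3 x"
  using sqrt3_bounds mult_left_mono [of "sqrt 3" "1.733" "- of_int (snd x)"]
    mult_left_mono [of "1.732" "sqrt 3" "of_int (snd x)"]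
  by (auto simp: zsqrt3_lower_def real_of_zsqrt3_def algebra_simps)

lemma zsqrt3_upper_ge: "1000 * real_of_zsqrt3 x \<le> of_int (zsqrt3_upper x)"
  using sqrt3_bounds mult_left_mono [of "1.732" "sqrt 3" "- of_int (snd x)"]
    mult_left_mono [of "sqrt 3" "1.733" "of_int (snd x)"]
  by (auto simp: zsqrt3_upper_def real_of_zsqrt3_def algebra_simps)

lemma prime_square_eq_mult_square_imp_zero:
  fixes a b p :: int
  assumes "prime p" and "a\<^sup>2 = p * b\<^sup>2"
  shows "b = 0"
  using assms(2)
proof (induction "nat \<bar>b\<bar>" arbitrary: a b rule: less_induct)
  case less
  show ?case
  proof (rule ccontr)
    assume "b \<noteq> 0"
    have "p dvd a\<^sup>2"
      using less.prems by simp
    then obtain c where a: "a = p * c"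
      using assms(1) prime_dvd_power by blast
    have p0: "p \<noteq> 0" and p1: "\<bar>p\<bar> > 1"
      using assms(1) prime_gt_1_int by auto
    then have bc: "b\<^sup>2 = p * c\<^sup>2"
      using less.prems by (auto simp: a power2_eq_square algebra_simps)
    then have "p dvd b\<^sup>2"
      by simp
    then obtain d where b: "b = p * d"
      using assms(1) prime_dvd_power by blast
    have "c\<^sup>2 = p * d\<^sup>2"
      using bc p0 by (auto simp: b power2_eq_square algebra_simps)
    moreover have "nat \<bar>d\<bar> < nat \<bar>b\<bar>"
      using \<open>b \<noteq> 0\<close> p1 by (simp add: b abs_mult)
    ultimately have "d = 0"
      using less.hyps by blast
    with \<open>b \<noteq> 0\<close> show False
      by (simp add: b)
  qed
qed

lemma real_of_zsqrt3_eq_0_iff [simp]: "real_of_zsqrt3 x = 0 \<longleftrightarrow> x = (0, 0)"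
proof
  assume x0: "real_of_zsqrt3 x = 0"
  obtain p q where x: "x = (p, q)"
    by fastforce
  have p: "of_int p = - (of_int q * sqrt 3 :: real)"
    using x0 by (simp add: real_of_zsqrt3_def x eq_neg_iff_add_eq_0)
  then have "(of_int p)\<^sup>2 = (of_int q * sqrt 3 :: real)\<^sup>2"
    by simp
  then have "real_of_int (p\<^sup>2) = real_of_int (3 * q\<^sup>2)"
    by (simp add: power_mult_distrib)
  then have "p\<^sup>2 = 3 * q\<^sup>2"
    by (simp only: of_int_eq_iff)
  then have "q = 0"
    by (rule prime_square_eq_mult_square_imp_zero [rotated]) simp
  with p show "x = (0, 0)"
    by (simp add: x)
qed (simp add: real_of_zsqrt3_def)

lemma inj_real_of_zsqrt3: "inj real_of_zsqrt3"
proof (rule injI)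
  fix x y
  assume "real_of_zsqrt3 x = real_of_zsqrt3 y"
  then have "zsqrt3_diff x y = (0, 0)"
    by (simp flip: real_of_zsqrt3_eq_0_iff)
  then show "x = y"
    by (simp add: zsqrt3_diff_def prod_eq_iff)
qed

section \<open>Certificates for matchstick graphs\<close>

type_synonym zpoint = "zsqrt3 \<times> zsqrt3"

text \<open>The factor \<open>1/10\<close> keeps all coordinates of the graphs below integral.\<close>

definition point :: "zpoint \<Rightarrow> complex" where
  "point P = Complex (real_of_zsqrt3 (fst P) / 10) (real_of_zsqrt3 (snd P) / 10)"

lemma inj_point: "inj point"
  using inj_real_of_zsqrt3
  by (auto intro!: injI simp: point_def complex_eq_iff prod_eq_iff dest: injD)

definition unit_distance :: "zpoint \<Rightarrow> zpoint \<Rightarrow> bool" where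
  "unit_distance P Q \<longleftrightarrow>
     (let dx = zsqrt3_diff (fst P) (fst Q); dy = zsqrt3_diff (snd P) (snd Q)
      in zsqrt3_add (zsqrt3_mult dx dx) (zsqrt3_mult dy dy) = (100, 0))"

lemma dist_point_eq_1:
  assumes "unit_distance P Q"
  shows "dist (point P) (point Q) = 1"
proof -
  define dx where "dx = real_of_zsqrt3 (fst P) - real_of_zsqrt3 (fst Q)"
  define dy where "dy = real_of_zsqrt3 (snd P) - real_of_zsqrt3 (snd Q)"
  have "real_of_zsqrt3 (zsqrt3_add (zsqrt3_mult (zsqrt3_diff (fst P) (fst Q)) (zsqrt3_diff (fst P) (fst Q)))
      (zsqrt3_mult (zsqrt3_diff (snd P) (snd Q)) (zsqrt3_diff (snd P) (snd Q)))) = 100"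
    using assms by (simp add: unit_distance_def Let_def)
  then have "dx * dx + dy * dy = 100"
    by (simp add: dx_def dy_def)
  then have "(dx / 10)\<^sup>2 + (dy / 10)\<^sup>2 = 1"
    by (simp add: power2_eq_square field_simps)
  then show ?thesis
    by (simp add: dist_norm norm_complex_def point_def dx_def dy_def diff_divide_distrib)
qed

definition zdot :: "zpoint \<Rightarrow> zpoint \<Rightarrow> zsqrt3" where
  "zdot w P = zsqrt3_add (zsqrt3_mult (fst w) (fst P)) (zsqrt3_mult (snd w) (snd P))"

lemma real_of_zdot:
  "real_of_zsqrt3 (zdot w P) =
     10 * (real_of_zsqrt3 (fst w) * Re (point P) + real_of_zsqrt3 (snd w) * Im (point P))"
  by (simp add: zdot_def point_def)

type_synonym zedge = "zpoint \<times> zpoint"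

definition edge_segment :: "zedge \<Rightarrow> complex set" where
  "edge_segment e = closed_segment (point (fst e)) (point (snd e))"

definition endpoints :: "zedge \<Rightarrow> complex set" where
  "endpoints e = {point (fst e), point (snd e)}"

definition below :: "zpoint \<Rightarrow> zedge \<Rightarrow> zedge \<Rightarrow> bool" where
  "below w e f \<longleftrightarrow>
     list_all (\<lambda>P. list_all (\<lambda>Q. zsqrt3_pos (zsqrt3_diff (zdot w Q) (zdot w P))) [fst f, snd f])
       [fst e, snd e]"

lemma below_imp_disjoint:
  assumes "below w e f"
  shows "edge_segment e \<inter> edge_segment f = {}"
proof -
  define \<phi> where "\<phi> z = real_of_zsqrt3 (fst w) * Re z + real_of_zsqrt3 (snd w) * Im z" for z
  have "linear \<phi>"
    by (rule linearI) (simp_all add: \<phi>_def algebra_simps)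
  moreover have "\<phi> (point P) < \<phi> (point Q)"
    if "zsqrt3_pos (zsqrt3_diff (zdot w Q) (zdot w P))" for P Q
    using real_of_zsqrt3_pos [OF that] by (simp add: real_of_zdot \<phi>_def)
  then have "max (\<phi> (point (fst e))) (\<phi> (point (snd e))) < min (\<phi> (point (fst f))) (\<phi> (point (snd f)))"
    using assms by (simp add: below_def)
  ultimately show ?thesis
    unfolding edge_segment_def by (rule closed_segments_disjoint_if_separated)
qed

definition coord_below :: "(zpoint \<Rightarrow> zsqrt3) \<Rightarrow> zedge \<Rightarrow> zedge \<Rightarrow> bool" where
  "coord_below c e f \<longleftrightarrow>
     max (zsqrt3_upper (c (fst e))) (zsqrt3_upper (c (snd e)))
       < min (zsqrt3_lower (c (fst f))) (zsqrt3_lower (c (snd f)))"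

lemma coord_below_imp_disjoint:
  assumes "linear \<phi>" and "\<And>P. \<phi> (point P) = real_of_zsqrt3 (c P) / 10" and "coord_below c e f"
  shows "edge_segment e \<inter> edge_segment f = {}"
proof -
  have "\<phi> (point P) < \<phi> (point Q)"
    if "zsqrt3_upper (c P) < zsqrt3_lower (c Q)" for P Q
  proof -
    have "real_of_int (zsqrt3_upper (c P)) < real_of_int (zsqrt3_lower (c Q))"
      using that by simp
    then show ?thesis
      using zsqrt3_upper_ge [of "c P"] zsqrt3_lower_le [of "c Q"] assms(2) [of P] assms(2) [of Q]
      by linarith
  qed
  then have "max (\<phi> (point (fst e))) (\<phi> (point (snd e))) < min (\<phi> (point (fst f))) (\<phi> (point (snd f)))"
    using assms(3) by (simp add: coord_below_def)
  with assms(1) show ?thesis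
    unfolding edge_segment_def by (rule closed_segments_disjoint_if_separated)
qed

definition box_separated :: "zedge \<Rightarrow> zedge \<Rightarrow> bool" where
  "box_separated e f \<longleftrightarrow>
     coord_below fst e f \<or> coord_below fst f e \<or> coord_below snd e f \<or> coord_below snd f e"

lemma box_separated_imp_disjoint:
  assumes "box_separated e f"
  shows "edge_segment e \<inter> edge_segment f = {}"
proof -
  have "linear Re" and "linear Im"
    by (simp_all add: bounded_linear.linear bounded_linear_Re bounded_linear_Im)
  have "edge_segment e' \<inter> edge_segment f' = {}" if "coord_below fst e' f'" for e' f'
    by (rule coord_below_imp_disjoint [OF \<open>linear Re\<close> _ that]) (simp add: point_def)
  moreover have "edge_segment e' \<inter> edge_segment f' = {}" if "coord_below snd e' f'" for e' f'
    by (rule coord_below_imp_disjoint [OF \<open>linear Im\<close> _ that]) (simp add: point_def)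
  ultimately show ?thesis
    using assms unfolding box_separated_def by blast
qed

definition direction :: "zedge \<Rightarrow> zpoint" where
  "direction e = (zsqrt3_diff (fst (snd e)) (fst (fst e)), zsqrt3_diff (snd (snd e)) (snd (fst e)))"

definition normal :: "zedge \<Rightarrow> zpoint" where
  "normal e = (zsqrt3_diff (snd (fst e)) (snd (snd e)), zsqrt3_diff (fst (snd e)) (fst (fst e)))"

definition shares_endpoint :: "zedge \<Rightarrow> zedge \<Rightarrow> bool" where
  "shares_endpoint e f \<longleftrightarrow> fst e = fst f \<or> fst e = snd f \<or> snd e = fst f \<or> snd e = snd f"

text \<open>Conditionals rather than disjunctions, here and in \<open>noncrossing\<close>, make evaluation
  stop at the first test that succeeds.\<close>

fun separated_by :: "zpoint list \<Rightarrow> zedge \<Rightarrow> zedge \<Rightarrow> bool" where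
  "separated_by [] e f \<longleftrightarrow> False"
| "separated_by (w # ws) e f \<longleftrightarrow> (if below w e f \<or> below w f e then True else separated_by ws e f)"

lemma separated_by_imp_disjoint:
  assumes "separated_by ws e f"
  shows "edge_segment e \<inter> edge_segment f = {}"
  using assms by (induction ws) (auto split: if_splits dest: below_imp_disjoint)

definition noncrossing :: "zedge \<Rightarrow> zedge \<Rightarrow> bool" where
  "noncrossing e f \<longleftrightarrow> e \<noteq> f \<and> e \<noteq> prod.swap f \<and>
     (if shares_endpoint e f \<or> box_separated e f then True
      else separated_by [normal e, normal f, direction e] e f)"

definition unit_edge :: "zedge \<Rightarrow> bool" where
  "unit_edge e \<longleftrightarrow> fst e \<noteq> snd e \<and> unit_distance (fst e) (snd e)"

lemma endpoints_eq_iff: "endpoints e = endpoints f \<longleftrightarrow> e = f \<or> e = prod.swap f"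
  by (cases e, cases f) (auto simp: endpoints_def doubleton_eq_iff inj_eq [OF inj_point])

lemma noncrossing_imp_inter_subset:
  assumes "unit_edge e" and "unit_edge f" and "noncrossing e f"
  shows "edge_segment e \<inter> edge_segment f \<subseteq> endpoints e \<inter> endpoints f"
proof (cases "shares_endpoint e f")
  case True
  have "dist (point (fst e)) (point (snd e)) = dist (point (fst f)) (point (snd f))"
    using assms(1,2) by (simp add: unit_edge_def dist_point_eq_1)
  moreover have "endpoints e \<inter> endpoints f \<noteq> {}"
    using True by (auto simp: shares_endpoint_def endpoints_def)
  moreover have "endpoints e \<noteq> endpoints f"
    using assms(3) by (simp add: endpoints_eq_iff noncrossing_def)
  ultimately show ?thesis
    unfolding edge_segment_def endpoints_def by (rule closed_segments_inter_common_endpoint)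
next
  case False
  with assms(3) have "box_separated e f \<or> separated_by [normal e, normal f, direction e] e f"
    by (auto simp: noncrossing_def simp del: separated_by.simps split: if_splits)
  then show ?thesis
    using box_separated_imp_disjoint separated_by_imp_disjoint by blast
qed

definition incident :: "zpoint \<Rightarrow> zedge \<Rightarrow> bool" where
  "incident P e \<longleftrightarrow> P = fst e \<or> P = snd e"

definition matchstick_certificate :: "zpoint list \<Rightarrow> zedge list \<Rightarrow> bool" where
  "matchstick_certificate vs es \<longleftrightarrow>
     distinct vs \<and>
     (\<forall>e\<in>set es. unit_edge e \<and> fst e \<in> set vs \<and> snd e \<in> set vs) \<and>
     (\<forall>P\<in>set vs. length (filter (incident P) es) = 4) \<and>
     sorted_wrt noncrossing es"

lemma sorted_wrt_mem_imp:
  assumes "sorted_wrt R xs" and "x \<in> set xs" and "y \<in> set xs" and "x \<noteq> y"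
  shows "R x y \<or> R y x"
  using assms by (induction xs) auto

lemma distinct_map_endpoints:
  assumes "sorted_wrt noncrossing es"
  shows "distinct (map endpoints es)"
  using assms by (induction es) (auto simp: noncrossing_def endpoints_eq_iff)

lemma closed_segment_eq_edge_segment:
  assumes "endpoints e = {a, b}"
  shows "closed_segment a b = edge_segment e"
  using assms by (auto simp: endpoints_def edge_segment_def doubleton_eq_iff closed_segment_commute)

lemma matchstick_graph_of_certificate:
  assumes "matchstick_certificate vs es"
  shows "matchstick_graph (point ` set vs) (endpoints ` set es)"
  unfolding matchstick_graph_def
proof (intro conjI allI impI ballI)
  fix E
  assume "E \<in> endpoints ` set es"
  then obtain e where "e \<in> set es" and E: "E = endpoints e"
    by blast
  with assms have "unit_edge e" and "fst e \<in> set vs" and "snd e \<in> set vs"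
    by (auto simp: matchstick_certificate_def)
  then show "\<exists>a b. E = {a, b} \<and> a \<in> point ` set vs \<and> b \<in> point ` set vs \<and> a \<noteq> b \<and> dist a b = 1"
    using E by (intro exI [of _ "point (fst e)"] exI [of _ "point (snd e)"])
      (auto simp: unit_edge_def endpoints_def inj_eq [OF inj_point] dist_point_eq_1)
next
  fix a b c d
  assume ab: "{a, b} \<in> endpoints ` set es" and cd: "{c, d} \<in> endpoints ` set es"
    and "{a, b} \<noteq> {c, d}"
  obtain e where e: "e \<in> set es" "endpoints e = {a, b}"
    using ab by force
  obtain f where f: "f \<in> set es" "endpoints f = {c, d}"
    using cd by force
  have "e \<noteq> f"
    using e f \<open>{a, b} \<noteq> {c, d}\<close> by auto
  with assms e(1) f(1) have "noncrossing e f \<or> noncrossing f e" and "unit_edge e" and "unit_edge f"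
    using sorted_wrt_mem_imp [of noncrossing es e f] by (auto simp: matchstick_certificate_def)
  then have "edge_segment e \<inter> edge_segment f \<subseteq> endpoints e \<inter> endpoints f"
    using noncrossing_imp_inter_subset by blast
  then show "closed_segment a b \<inter> closed_segment c d \<subseteq> {a, b} \<inter> {c, d}"
    using e f by (simp add: closed_segment_eq_edge_segment)
qed simp

lemma degree_of_certificate:
  assumes "matchstick_certificate vs es" and "P \<in> set vs"
  shows "degree (endpoints ` set es) (point P) = 4"
proof -
  have "{E \<in> endpoints ` set es. point P \<in> E} = set (map endpoints (filter (incident P) es))"
    by (auto simp: endpoints_def incident_def inj_eq [OF inj_point])
  then have "degree (endpoints ` set es) (point P) = card (set (map endpoints (filter (incident P) es)))"
    by (simp only: degree_def)
  also have "\<dots> = length (filter (incident P) es)"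
    using assms(1) distinct_card [OF distinct_map_filter [OF distinct_map_endpoints]]
    by (simp add: matchstick_certificate_def)
  also have "\<dots> = 4"
    using assms by (simp add: matchstick_certificate_def)
  finally show ?thesis .
qed

lemma four_regular_matchstick_graph_of_certificate:
  assumes "matchstick_certificate vs es"
  shows "\<exists>V E. four_regular_matchstick_graph V E \<and> card V = length vs"
proof (intro exI conjI)
  show "four_regular_matchstick_graph (point ` set vs) (endpoints ` set es)"
    using assms matchstick_graph_of_certificate degree_of_certificate
    by (auto simp: four_regular_matchstick_graph_def)
  show "card (point ` set vs) = length vs"
    using assms inj_point
    by (simp add: card_image inj_on_subset distinct_card matchstick_certificate_def)
qed

section \<open>Three 4-regular matchstick graphs\<close>

definition vertices94 :: "zpoint list" where
  "vertices94 = [((-38,0),(-24,0)),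
    ((-35,-4),(-20,3)),
    ((-33,0),(-24,-5)),
    ((-32,-8),(-16,6)),
    ((-32,0),(-16,0)),
    ((-29,-12),(-12,9)),
    ((-29,-4),(-12,3)),
    ((-28,0),(-24,-10)),
    ((-28,0),(-24,0)),
    ((-26,-8),(-8,6)),
    ((-25,4),(-20,-13)),
    ((-24,-12),(-12,14)),
    ((-23,0),(-24,-5)),
    ((-22,0),(-16,-10)),
    ((-22,0),(-16,0)),
    ((-22,8),(-16,-16)),
    ((-19,-12),(-12,9)),
    ((-19,-12),(-12,19)),
    ((-19,-4),(-12,3)),
    ((-19,4),(-12,-13)),
    ((-19,12),(-12,-19)),
    ((-17,0),(-16,-5)),
    ((-16,-8),(-8,6)),
    ((-16,-8),(-8,16)),
    ((-16,0),(-8,0)),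
    ((-16,8),(-8,-16)),
    ((-14,-12),(-12,14)),
    ((-14,12),(-12,-14)),
    ((-13,-12),(-4,19)),
    ((-13,-4),(-4,3)),
    ((-11,-8),(-8,11)),
    ((-11,0),(-8,-5)),
    ((-11,8),(-8,-11)),
    ((-10,-8),(0,16)),
    ((-9,12),(-12,-19)),
    ((-8,-4),(-4,8)),
    ((-8,4),(-4,-8)),
    ((-7,-12),(4,19)),
    ((-6,0),(-8,0)),
    ((-5,-8),(0,11)),
    ((-4,-8),(8,16)),
    ((-4,12),(-12,-14)),
    ((-3,-4),(-4,3)),
    ((-3,4),(-4,-3)),
    ((-2,-4),(4,8)),
    ((-1,-12),(12,19)),
    ((-1,8),(-8,-11)),
    ((1,-8),(8,11)),
    ((1,12),(-12,-19)),
    ((2,4),(-4,-8)),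
    ((3,-4),(4,3)),
    ((3,4),(4,-3)),
    ((4,-12),(12,14)),
    ((4,8),(-8,-16)),
    ((5,8),(0,-11)),
    ((6,0),(8,0)),
    ((7,12),(-4,-19)),
    ((8,-4),(4,8)),
    ((8,4),(4,-8)),
    ((9,-12),(12,19)),
    ((10,8),(0,-16)),
    ((11,-8),(8,11)),
    ((11,0),(8,5)),
    ((11,8),(8,-11)),
    ((13,4),(4,-3)),
    ((13,12),(4,-19)),
    ((14,-12),(12,14)),
    ((14,12),(12,-14)),
    ((16,-8),(8,16)),
    ((16,0),(8,0)),
    ((16,8),(8,-16)),
    ((16,8),(8,-6)),
    ((17,0),(16,5)),
    ((19,-12),(12,19)),
    ((19,-4),(12,13)),
    ((19,4),(12,-3)),
    ((19,12),(12,-19)),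
    ((19,12),(12,-9)),
    ((22,-8),(16,16)),
    ((22,0),(16,0)),
    ((22,0),(16,10)),
    ((23,0),(24,5)),
    ((24,12),(12,-14)),
    ((25,-4),(20,13)),
    ((26,8),(8,-6)),
    ((28,0),(24,0)),
    ((28,0),(24,10)),
    ((29,4),(12,-3)),
    ((29,12),(12,-9)),
    ((32,0),(16,0)),
    ((32,8),(16,-6)),
    ((33,0),(24,5)),
    ((35,4),(20,-3)),
    ((38,0),(24,0))]"

definition edges94 :: "(zpoint \<times> zpoint) list" where
  "edges94 = [(((-38,0),(-24,0)),((-35,-4),(-20,3))),
    (((-38,0),(-24,0)),((-33,0),(-24,-5))),
    (((-38,0),(-24,0)),((-32,0),(-16,0))),
    (((-38,0),(-24,0)),((-28,0),(-24,0))),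
    (((-35,-4),(-20,3)),((-32,-8),(-16,6))),
    (((-35,-4),(-20,3)),((-32,0),(-16,0))),
    (((-35,-4),(-20,3)),((-29,-4),(-12,3))),
    (((-33,0),(-24,-5)),((-28,0),(-24,-10))),
    (((-33,0),(-24,-5)),((-28,0),(-24,0))),
    (((-33,0),(-24,-5)),((-23,0),(-24,-5))),
    (((-32,-8),(-16,6)),((-29,-12),(-12,9))),
    (((-32,-8),(-16,6)),((-29,-4),(-12,3))),
    (((-32,-8),(-16,6)),((-26,-8),(-8,6))),
    (((-32,0),(-16,0)),((-29,-4),(-12,3))),
    (((-32,0),(-16,0)),((-22,0),(-16,0))),
    (((-29,-12),(-12,9)),((-26,-8),(-8,6))),
    (((-29,-12),(-12,9)),((-24,-12),(-12,14))),
    (((-29,-12),(-12,9)),((-19,-12),(-12,9))),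
    (((-29,-4),(-12,3)),((-26,-8),(-8,6))),
    (((-28,0),(-24,-10)),((-25,4),(-20,-13))),
    (((-28,0),(-24,-10)),((-23,0),(-24,-5))),
    (((-28,0),(-24,-10)),((-22,0),(-16,-10))),
    (((-28,0),(-24,0)),((-23,0),(-24,-5))),
    (((-28,0),(-24,0)),((-22,0),(-16,0))),
    (((-26,-8),(-8,6)),((-16,-8),(-8,6))),
    (((-25,4),(-20,-13)),((-22,0),(-16,-10))),
    (((-25,4),(-20,-13)),((-22,8),(-16,-16))),
    (((-25,4),(-20,-13)),((-19,4),(-12,-13))),
    (((-24,-12),(-12,14)),((-19,-12),(-12,9))),
    (((-24,-12),(-12,14)),((-19,-12),(-12,19))),
    (((-24,-12),(-12,14)),((-14,-12),(-12,14))),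
    (((-23,0),(-24,-5)),((-17,0),(-16,-5))),
    (((-22,0),(-16,-10)),((-19,4),(-12,-13))),
    (((-22,0),(-16,-10)),((-17,0),(-16,-5))),
    (((-22,0),(-16,0)),((-19,-4),(-12,3))),
    (((-22,0),(-16,0)),((-17,0),(-16,-5))),
    (((-22,8),(-16,-16)),((-19,4),(-12,-13))),
    (((-22,8),(-16,-16)),((-19,12),(-12,-19))),
    (((-22,8),(-16,-16)),((-16,8),(-8,-16))),
    (((-19,-12),(-12,9)),((-16,-8),(-8,6))),
    (((-19,-12),(-12,9)),((-14,-12),(-12,14))),
    (((-19,-12),(-12,19)),((-16,-8),(-8,16))),
    (((-19,-12),(-12,19)),((-14,-12),(-12,14))),
    (((-19,-12),(-12,19)),((-13,-12),(-4,19))),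
    (((-19,-4),(-12,3)),((-16,-8),(-8,6))),
    (((-19,-4),(-12,3)),((-16,0),(-8,0))),
    (((-19,-4),(-12,3)),((-13,-4),(-4,3))),
    (((-19,4),(-12,-13)),((-16,8),(-8,-16))),
    (((-19,12),(-12,-19)),((-16,8),(-8,-16))),
    (((-19,12),(-12,-19)),((-14,12),(-12,-14))),
    (((-19,12),(-12,-19)),((-9,12),(-12,-19))),
    (((-17,0),(-16,-5)),((-11,0),(-8,-5))),
    (((-16,-8),(-8,6)),((-11,-8),(-8,11))),
    (((-16,-8),(-8,16)),((-13,-12),(-4,19))),
    (((-16,-8),(-8,16)),((-11,-8),(-8,11))),
    (((-16,-8),(-8,16)),((-10,-8),(0,16))),
    (((-16,0),(-8,0)),((-13,-4),(-4,3))),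
    (((-16,0),(-8,0)),((-11,0),(-8,-5))),
    (((-16,0),(-8,0)),((-6,0),(-8,0))),
    (((-16,8),(-8,-16)),((-11,8),(-8,-11))),
    (((-14,-12),(-12,14)),((-11,-8),(-8,11))),
    (((-14,12),(-12,-14)),((-11,8),(-8,-11))),
    (((-14,12),(-12,-14)),((-9,12),(-12,-19))),
    (((-14,12),(-12,-14)),((-4,12),(-12,-14))),
    (((-13,-12),(-4,19)),((-10,-8),(0,16))),
    (((-13,-12),(-4,19)),((-7,-12),(4,19))),
    (((-13,-4),(-4,3)),((-8,-4),(-4,8))),
    (((-13,-4),(-4,3)),((-3,-4),(-4,3))),
    (((-11,-8),(-8,11)),((-5,-8),(0,11))),
    (((-11,0),(-8,-5)),((-8,4),(-4,-8))),
    (((-11,0),(-8,-5)),((-6,0),(-8,0))),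
    (((-11,8),(-8,-11)),((-8,4),(-4,-8))),
    (((-11,8),(-8,-11)),((-1,8),(-8,-11))),
    (((-10,-8),(0,16)),((-7,-12),(4,19))),
    (((-10,-8),(0,16)),((-4,-8),(8,16))),
    (((-9,12),(-12,-19)),((-4,12),(-12,-14))),
    (((-9,12),(-12,-19)),((1,12),(-12,-19))),
    (((-8,-4),(-4,8)),((-5,-8),(0,11))),
    (((-8,-4),(-4,8)),((-3,-4),(-4,3))),
    (((-8,-4),(-4,8)),((-2,-4),(4,8))),
    (((-8,4),(-4,-8)),((-3,4),(-4,-3))),
    (((-8,4),(-4,-8)),((2,4),(-4,-8))),
    (((-7,-12),(4,19)),((-4,-8),(8,16))),
    (((-7,-12),(4,19)),((-1,-12),(12,19))),
    (((-6,0),(-8,0)),((-3,-4),(-4,3))),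
    (((-6,0),(-8,0)),((-3,4),(-4,-3))),
    (((-5,-8),(0,11)),((-2,-4),(4,8))),
    (((-5,-8),(0,11)),((1,-8),(8,11))),
    (((-4,-8),(8,16)),((-1,-12),(12,19))),
    (((-4,-8),(8,16)),((1,-8),(8,11))),
    (((-4,12),(-12,-14)),((-1,8),(-8,-11))),
    (((-4,12),(-12,-14)),((1,12),(-12,-19))),
    (((-3,-4),(-4,3)),((3,-4),(4,3))),
    (((-3,4),(-4,-3)),((2,4),(-4,-8))),
    (((-3,4),(-4,-3)),((3,4),(4,-3))),
    (((-2,-4),(4,8)),((3,-4),(4,3))),
    (((-2,-4),(4,8)),((8,-4),(4,8))),
    (((-1,-12),(12,19)),((4,-12),(12,14))),
    (((-1,-12),(12,19)),((9,-12),(12,19))),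
    (((-1,8),(-8,-11)),((4,8),(-8,-16))),
    (((-1,8),(-8,-11)),((5,8),(0,-11))),
    (((1,-8),(8,11)),((4,-12),(12,14))),
    (((1,-8),(8,11)),((11,-8),(8,11))),
    (((1,12),(-12,-19)),((4,8),(-8,-16))),
    (((1,12),(-12,-19)),((7,12),(-4,-19))),
    (((2,4),(-4,-8)),((5,8),(0,-11))),
    (((2,4),(-4,-8)),((8,4),(4,-8))),
    (((3,-4),(4,3)),((6,0),(8,0))),
    (((3,-4),(4,3)),((8,-4),(4,8))),
    (((3,4),(4,-3)),((6,0),(8,0))),
    (((3,4),(4,-3)),((8,4),(4,-8))),
    (((3,4),(4,-3)),((13,4),(4,-3))),
    (((4,-12),(12,14)),((9,-12),(12,19))),
    (((4,-12),(12,14)),((14,-12),(12,14))),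
    (((4,8),(-8,-16)),((7,12),(-4,-19))),
    (((4,8),(-8,-16)),((10,8),(0,-16))),
    (((5,8),(0,-11)),((8,4),(4,-8))),
    (((5,8),(0,-11)),((11,8),(8,-11))),
    (((6,0),(8,0)),((11,0),(8,5))),
    (((6,0),(8,0)),((16,0),(8,0))),
    (((7,12),(-4,-19)),((10,8),(0,-16))),
    (((7,12),(-4,-19)),((13,12),(4,-19))),
    (((8,-4),(4,8)),((11,-8),(8,11))),
    (((8,-4),(4,8)),((11,0),(8,5))),
    (((8,4),(4,-8)),((13,4),(4,-3))),
    (((9,-12),(12,19)),((14,-12),(12,14))),
    (((9,-12),(12,19)),((19,-12),(12,19))),
    (((10,8),(0,-16)),((13,12),(4,-19))),
    (((10,8),(0,-16)),((16,8),(8,-16))),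
    (((11,-8),(8,11)),((14,-12),(12,14))),
    (((11,-8),(8,11)),((16,-8),(8,16))),
    (((11,0),(8,5)),((16,0),(8,0))),
    (((11,0),(8,5)),((17,0),(16,5))),
    (((11,8),(8,-11)),((14,12),(12,-14))),
    (((11,8),(8,-11)),((16,8),(8,-16))),
    (((11,8),(8,-11)),((16,8),(8,-6))),
    (((13,4),(4,-3)),((16,0),(8,0))),
    (((13,4),(4,-3)),((19,4),(12,-3))),
    (((13,12),(4,-19)),((16,8),(8,-16))),
    (((13,12),(4,-19)),((19,12),(12,-19))),
    (((14,-12),(12,14)),((19,-12),(12,19))),
    (((14,12),(12,-14)),((19,12),(12,-19))),
    (((14,12),(12,-14)),((19,12),(12,-9))),
    (((14,12),(12,-14)),((24,12),(12,-14))),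
    (((16,-8),(8,16)),((19,-12),(12,19))),
    (((16,-8),(8,16)),((19,-4),(12,13))),
    (((16,-8),(8,16)),((22,-8),(16,16))),
    (((16,0),(8,0)),((19,4),(12,-3))),
    (((16,8),(8,-16)),((19,12),(12,-19))),
    (((16,8),(8,-6)),((19,4),(12,-3))),
    (((16,8),(8,-6)),((19,12),(12,-9))),
    (((16,8),(8,-6)),((26,8),(8,-6))),
    (((17,0),(16,5)),((22,0),(16,0))),
    (((17,0),(16,5)),((22,0),(16,10))),
    (((17,0),(16,5)),((23,0),(24,5))),
    (((19,-12),(12,19)),((22,-8),(16,16))),
    (((19,-4),(12,13)),((22,-8),(16,16))),
    (((19,-4),(12,13)),((22,0),(16,10))),
    (((19,-4),(12,13)),((25,-4),(20,13))),
    (((19,4),(12,-3)),((22,0),(16,0))),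
    (((19,12),(12,-19)),((24,12),(12,-14))),
    (((19,12),(12,-9)),((24,12),(12,-14))),
    (((19,12),(12,-9)),((29,12),(12,-9))),
    (((22,-8),(16,16)),((25,-4),(20,13))),
    (((22,0),(16,0)),((28,0),(24,0))),
    (((22,0),(16,0)),((32,0),(16,0))),
    (((22,0),(16,10)),((25,-4),(20,13))),
    (((22,0),(16,10)),((28,0),(24,10))),
    (((23,0),(24,5)),((28,0),(24,0))),
    (((23,0),(24,5)),((28,0),(24,10))),
    (((23,0),(24,5)),((33,0),(24,5))),
    (((24,12),(12,-14)),((29,12),(12,-9))),
    (((25,-4),(20,13)),((28,0),(24,10))),
    (((26,8),(8,-6)),((29,4),(12,-3))),
    (((26,8),(8,-6)),((29,12),(12,-9))),
    (((26,8),(8,-6)),((32,8),(16,-6))),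
    (((28,0),(24,0)),((33,0),(24,5))),
    (((28,0),(24,0)),((38,0),(24,0))),
    (((28,0),(24,10)),((33,0),(24,5))),
    (((29,4),(12,-3)),((32,0),(16,0))),
    (((29,4),(12,-3)),((32,8),(16,-6))),
    (((29,4),(12,-3)),((35,4),(20,-3))),
    (((29,12),(12,-9)),((32,8),(16,-6))),
    (((32,0),(16,0)),((35,4),(20,-3))),
    (((32,0),(16,0)),((38,0),(24,0))),
    (((32,8),(16,-6)),((35,4),(20,-3))),
    (((33,0),(24,5)),((38,0),(24,0))),
    (((35,4),(20,-3)),((38,0),(24,0)))]"

definition vertices95 :: "zpoint list" where
  "vertices95 = [((-38,0),(-24,0)),
    ((-35,-4),(-20,3)),
    ((-33,0),(-24,-5)),
    ((-32,-8),(-16,6)),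
    ((-32,0),(-16,0)),
    ((-29,-12),(-12,9)),
    ((-29,-4),(-12,3)),
    ((-28,0),(-24,-10)),
    ((-28,0),(-24,0)),
    ((-26,-8),(-8,6)),
    ((-25,4),(-20,-13)),
    ((-24,-12),(-12,14)),
    ((-23,0),(-24,-5)),
    ((-22,0),(-16,-10)),
    ((-22,0),(-16,0)),
    ((-22,8),(-16,-16)),
    ((-19,-12),(-12,9)),
    ((-19,-12),(-12,19)),
    ((-19,-4),(-12,3)),
    ((-19,4),(-12,-13)),
    ((-19,12),(-12,-19)),
    ((-17,0),(-16,-5)),
    ((-16,-8),(-8,6)),
    ((-16,-8),(-8,16)),
    ((-16,0),(-8,0)),
    ((-16,8),(-8,-16)),
    ((-14,-12),(-12,14)),
    ((-14,12),(-12,-14)),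
    ((-13,-12),(-4,19)),
    ((-13,-4),(-4,3)),
    ((-11,-8),(-8,11)),
    ((-11,0),(-8,-5)),
    ((-11,8),(-8,-11)),
    ((-10,-8),(0,16)),
    ((-9,12),(-12,-19)),
    ((-8,-4),(-4,8)),
    ((-8,4),(-4,-8)),
    ((-7,-12),(4,19)),
    ((-6,0),(-8,0)),
    ((-5,-8),(0,11)),
    ((-4,-8),(8,16)),
    ((-4,12),(-12,-14)),
    ((-3,-4),(-4,3)),
    ((-3,4),(-4,-3)),
    ((-2,-4),(4,8)),
    ((-1,-12),(12,19)),
    ((-1,8),(-8,-11)),
    ((0,0),(0,0)),
    ((1,-8),(8,11)),
    ((1,12),(-12,-19)),
    ((2,4),(-4,-8)),
    ((3,-4),(4,3)),
    ((3,4),(4,-3)),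
    ((4,-12),(12,14)),
    ((4,8),(-8,-16)),
    ((5,8),(0,-11)),
    ((6,0),(8,0)),
    ((7,12),(-4,-19)),
    ((8,-4),(4,8)),
    ((8,4),(4,-8)),
    ((9,-12),(12,19)),
    ((10,8),(0,-16)),
    ((11,-8),(8,11)),
    ((11,0),(8,5)),
    ((11,8),(8,-11)),
    ((13,4),(4,-3)),
    ((13,12),(4,-19)),
    ((14,-12),(12,14)),
    ((14,12),(12,-14)),
    ((16,-8),(8,16)),
    ((16,0),(8,0)),
    ((16,8),(8,-16)),
    ((16,8),(8,-6)),
    ((17,0),(16,5)),
    ((19,-12),(12,19)),
    ((19,-4),(12,13)),
    ((19,4),(12,-3)),
    ((19,12),(12,-19)),
    ((19,12),(12,-9)),
    ((22,-8),(16,16)),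
    ((22,0),(16,0)),
    ((22,0),(16,10)),
    ((23,0),(24,5)),
    ((24,12),(12,-14)),
    ((25,-4),(20,13)),
    ((26,8),(8,-6)),
    ((28,0),(24,0)),
    ((28,0),(24,10)),
    ((29,4),(12,-3)),
    ((29,12),(12,-9)),
    ((32,0),(16,0)),
    ((32,8),(16,-6)),
    ((33,0),(24,5)),
    ((35,4),(20,-3)),
    ((38,0),(24,0))]"

definition edges95 :: "(zpoint \<times> zpoint) list" where
  "edges95 = [(((-38,0),(-24,0)),((-35,-4),(-20,3))),
    (((-38,0),(-24,0)),((-33,0),(-24,-5))),
    (((-38,0),(-24,0)),((-32,0),(-16,0))),
    (((-38,0),(-24,0)),((-28,0),(-24,0))),
    (((-35,-4),(-20,3)),((-32,-8),(-16,6))),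
    (((-35,-4),(-20,3)),((-32,0),(-16,0))),
    (((-35,-4),(-20,3)),((-29,-4),(-12,3))),
    (((-33,0),(-24,-5)),((-28,0),(-24,-10))),
    (((-33,0),(-24,-5)),((-28,0),(-24,0))),
    (((-33,0),(-24,-5)),((-23,0),(-24,-5))),
    (((-32,-8),(-16,6)),((-29,-12),(-12,9))),
    (((-32,-8),(-16,6)),((-29,-4),(-12,3))),
    (((-32,-8),(-16,6)),((-26,-8),(-8,6))),
    (((-32,0),(-16,0)),((-29,-4),(-12,3))),
    (((-32,0),(-16,0)),((-22,0),(-16,0))),
    (((-29,-12),(-12,9)),((-26,-8),(-8,6))),
    (((-29,-12),(-12,9)),((-24,-12),(-12,14))),
    (((-29,-12),(-12,9)),((-19,-12),(-12,9))),
    (((-29,-4),(-12,3)),((-26,-8),(-8,6))),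
    (((-28,0),(-24,-10)),((-25,4),(-20,-13))),
    (((-28,0),(-24,-10)),((-23,0),(-24,-5))),
    (((-28,0),(-24,-10)),((-22,0),(-16,-10))),
    (((-28,0),(-24,0)),((-23,0),(-24,-5))),
    (((-28,0),(-24,0)),((-22,0),(-16,0))),
    (((-26,-8),(-8,6)),((-16,-8),(-8,6))),
    (((-25,4),(-20,-13)),((-22,0),(-16,-10))),
    (((-25,4),(-20,-13)),((-22,8),(-16,-16))),
    (((-25,4),(-20,-13)),((-19,4),(-12,-13))),
    (((-24,-12),(-12,14)),((-19,-12),(-12,9))),
    (((-24,-12),(-12,14)),((-19,-12),(-12,19))),
    (((-24,-12),(-12,14)),((-14,-12),(-12,14))),
    (((-23,0),(-24,-5)),((-17,0),(-16,-5))),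
    (((-22,0),(-16,-10)),((-19,4),(-12,-13))),
    (((-22,0),(-16,-10)),((-17,0),(-16,-5))),
    (((-22,0),(-16,0)),((-19,-4),(-12,3))),
    (((-22,0),(-16,0)),((-17,0),(-16,-5))),
    (((-22,8),(-16,-16)),((-19,4),(-12,-13))),
    (((-22,8),(-16,-16)),((-19,12),(-12,-19))),
    (((-22,8),(-16,-16)),((-16,8),(-8,-16))),
    (((-19,-12),(-12,9)),((-16,-8),(-8,6))),
    (((-19,-12),(-12,9)),((-14,-12),(-12,14))),
    (((-19,-12),(-12,19)),((-16,-8),(-8,16))),
    (((-19,-12),(-12,19)),((-14,-12),(-12,14))),
    (((-19,-12),(-12,19)),((-13,-12),(-4,19))),
    (((-19,-4),(-12,3)),((-16,-8),(-8,6))),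
    (((-19,-4),(-12,3)),((-16,0),(-8,0))),
    (((-19,-4),(-12,3)),((-13,-4),(-4,3))),
    (((-19,4),(-12,-13)),((-16,8),(-8,-16))),
    (((-19,12),(-12,-19)),((-16,8),(-8,-16))),
    (((-19,12),(-12,-19)),((-14,12),(-12,-14))),
    (((-19,12),(-12,-19)),((-9,12),(-12,-19))),
    (((-17,0),(-16,-5)),((-11,0),(-8,-5))),
    (((-16,-8),(-8,6)),((-11,-8),(-8,11))),
    (((-16,-8),(-8,16)),((-13,-12),(-4,19))),
    (((-16,-8),(-8,16)),((-11,-8),(-8,11))),
    (((-16,-8),(-8,16)),((-10,-8),(0,16))),
    (((-16,0),(-8,0)),((-13,-4),(-4,3))),
    (((-16,0),(-8,0)),((-11,0),(-8,-5))),
    (((-16,0),(-8,0)),((-6,0),(-8,0))),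
    (((-16,8),(-8,-16)),((-11,8),(-8,-11))),
    (((-14,-12),(-12,14)),((-11,-8),(-8,11))),
    (((-14,12),(-12,-14)),((-11,8),(-8,-11))),
    (((-14,12),(-12,-14)),((-9,12),(-12,-19))),
    (((-14,12),(-12,-14)),((-4,12),(-12,-14))),
    (((-13,-12),(-4,19)),((-10,-8),(0,16))),
    (((-13,-12),(-4,19)),((-7,-12),(4,19))),
    (((-13,-4),(-4,3)),((-8,-4),(-4,8))),
    (((-13,-4),(-4,3)),((-3,-4),(-4,3))),
    (((-11,-8),(-8,11)),((-5,-8),(0,11))),
    (((-11,0),(-8,-5)),((-8,4),(-4,-8))),
    (((-11,0),(-8,-5)),((-6,0),(-8,0))),
    (((-11,8),(-8,-11)),((-8,4),(-4,-8))),
    (((-11,8),(-8,-11)),((-1,8),(-8,-11))),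
    (((-10,-8),(0,16)),((-7,-12),(4,19))),
    (((-10,-8),(0,16)),((-4,-8),(8,16))),
    (((-9,12),(-12,-19)),((-4,12),(-12,-14))),
    (((-9,12),(-12,-19)),((1,12),(-12,-19))),
    (((-8,-4),(-4,8)),((-5,-8),(0,11))),
    (((-8,-4),(-4,8)),((-3,-4),(-4,3))),
    (((-8,-4),(-4,8)),((-2,-4),(4,8))),
    (((-8,4),(-4,-8)),((-3,4),(-4,-3))),
    (((-8,4),(-4,-8)),((2,4),(-4,-8))),
    (((-7,-12),(4,19)),((-4,-8),(8,16))),
    (((-7,-12),(4,19)),((-1,-12),(12,19))),
    (((-6,0),(-8,0)),((-3,-4),(-4,3))),
    (((-6,0),(-8,0)),((0,0),(0,0))),
    (((-5,-8),(0,11)),((-2,-4),(4,8))),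
    (((-5,-8),(0,11)),((1,-8),(8,11))),
    (((-4,-8),(8,16)),((-1,-12),(12,19))),
    (((-4,-8),(8,16)),((1,-8),(8,11))),
    (((-4,12),(-12,-14)),((-1,8),(-8,-11))),
    (((-4,12),(-12,-14)),((1,12),(-12,-19))),
    (((-3,-4),(-4,3)),((3,-4),(4,3))),
    (((-3,4),(-4,-3)),((0,0),(0,0))),
    (((-3,4),(-4,-3)),((2,4),(-4,-8))),
    (((-3,4),(-4,-3)),((3,4),(4,-3))),
    (((-2,-4),(4,8)),((3,-4),(4,3))),
    (((-2,-4),(4,8)),((8,-4),(4,8))),
    (((-1,-12),(12,19)),((4,-12),(12,14))),
    (((-1,-12),(12,19)),((9,-12),(12,19))),
    (((-1,8),(-8,-11)),((4,8),(-8,-16))),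
    (((-1,8),(-8,-11)),((5,8),(0,-11))),
    (((0,0),(0,0)),((3,-4),(4,3))),
    (((0,0),(0,0)),((6,0),(8,0))),
    (((1,-8),(8,11)),((4,-12),(12,14))),
    (((1,-8),(8,11)),((11,-8),(8,11))),
    (((1,12),(-12,-19)),((4,8),(-8,-16))),
    (((1,12),(-12,-19)),((7,12),(-4,-19))),
    (((2,4),(-4,-8)),((5,8),(0,-11))),
    (((2,4),(-4,-8)),((8,4),(4,-8))),
    (((3,-4),(4,3)),((8,-4),(4,8))),
    (((3,4),(4,-3)),((6,0),(8,0))),
    (((3,4),(4,-3)),((8,4),(4,-8))),
    (((3,4),(4,-3)),((13,4),(4,-3))),
    (((4,-12),(12,14)),((9,-12),(12,19))),
    (((4,-12),(12,14)),((14,-12),(12,14))),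
    (((4,8),(-8,-16)),((7,12),(-4,-19))),
    (((4,8),(-8,-16)),((10,8),(0,-16))),
    (((5,8),(0,-11)),((8,4),(4,-8))),
    (((5,8),(0,-11)),((11,8),(8,-11))),
    (((6,0),(8,0)),((11,0),(8,5))),
    (((6,0),(8,0)),((16,0),(8,0))),
    (((7,12),(-4,-19)),((10,8),(0,-16))),
    (((7,12),(-4,-19)),((13,12),(4,-19))),
    (((8,-4),(4,8)),((11,-8),(8,11))),
    (((8,-4),(4,8)),((11,0),(8,5))),
    (((8,4),(4,-8)),((13,4),(4,-3))),
    (((9,-12),(12,19)),((14,-12),(12,14))),
    (((9,-12),(12,19)),((19,-12),(12,19))),
    (((10,8),(0,-16)),((13,12),(4,-19))),
    (((10,8),(0,-16)),((16,8),(8,-16))),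
    (((11,-8),(8,11)),((14,-12),(12,14))),
    (((11,-8),(8,11)),((16,-8),(8,16))),
    (((11,0),(8,5)),((16,0),(8,0))),
    (((11,0),(8,5)),((17,0),(16,5))),
    (((11,8),(8,-11)),((14,12),(12,-14))),
    (((11,8),(8,-11)),((16,8),(8,-16))),
    (((11,8),(8,-11)),((16,8),(8,-6))),
    (((13,4),(4,-3)),((16,0),(8,0))),
    (((13,4),(4,-3)),((19,4),(12,-3))),
    (((13,12),(4,-19)),((16,8),(8,-16))),
    (((13,12),(4,-19)),((19,12),(12,-19))),
    (((14,-12),(12,14)),((19,-12),(12,19))),
    (((14,12),(12,-14)),((19,12),(12,-19))),
    (((14,12),(12,-14)),((19,12),(12,-9))),
    (((14,12),(12,-14)),((24,12),(12,-14))),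
    (((16,-8),(8,16)),((19,-12),(12,19))),
    (((16,-8),(8,16)),((19,-4),(12,13))),
    (((16,-8),(8,16)),((22,-8),(16,16))),
    (((16,0),(8,0)),((19,4),(12,-3))),
    (((16,8),(8,-16)),((19,12),(12,-19))),
    (((16,8),(8,-6)),((19,4),(12,-3))),
    (((16,8),(8,-6)),((19,12),(12,-9))),
    (((16,8),(8,-6)),((26,8),(8,-6))),
    (((17,0),(16,5)),((22,0),(16,0))),
    (((17,0),(16,5)),((22,0),(16,10))),
    (((17,0),(16,5)),((23,0),(24,5))),
    (((19,-12),(12,19)),((22,-8),(16,16))),
    (((19,-4),(12,13)),((22,-8),(16,16))),
    (((19,-4),(12,13)),((22,0),(16,10))),
    (((19,-4),(12,13)),((25,-4),(20,13))),
    (((19,4),(12,-3)),((22,0),(16,0))),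
    (((19,12),(12,-19)),((24,12),(12,-14))),
    (((19,12),(12,-9)),((24,12),(12,-14))),
    (((19,12),(12,-9)),((29,12),(12,-9))),
    (((22,-8),(16,16)),((25,-4),(20,13))),
    (((22,0),(16,0)),((28,0),(24,0))),
    (((22,0),(16,0)),((32,0),(16,0))),
    (((22,0),(16,10)),((25,-4),(20,13))),
    (((22,0),(16,10)),((28,0),(24,10))),
    (((23,0),(24,5)),((28,0),(24,0))),
    (((23,0),(24,5)),((28,0),(24,10))),
    (((23,0),(24,5)),((33,0),(24,5))),
    (((24,12),(12,-14)),((29,12),(12,-9))),
    (((25,-4),(20,13)),((28,0),(24,10))),
    (((26,8),(8,-6)),((29,4),(12,-3))),
    (((26,8),(8,-6)),((29,12),(12,-9))),
    (((26,8),(8,-6)),((32,8),(16,-6))),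
    (((28,0),(24,0)),((33,0),(24,5))),
    (((28,0),(24,0)),((38,0),(24,0))),
    (((28,0),(24,10)),((33,0),(24,5))),
    (((29,4),(12,-3)),((32,0),(16,0))),
    (((29,4),(12,-3)),((32,8),(16,-6))),
    (((29,4),(12,-3)),((35,4),(20,-3))),
    (((29,12),(12,-9)),((32,8),(16,-6))),
    (((32,0),(16,0)),((35,4),(20,-3))),
    (((32,0),(16,0)),((38,0),(24,0))),
    (((32,8),(16,-6)),((35,4),(20,-3))),
    (((33,0),(24,5)),((38,0),(24,0))),
    (((35,4),(20,-3)),((38,0),(24,0)))]"

definition vertices96 :: "zpoint list" where
  "vertices96 = [((-44,0),(-18,0)),
    ((-40,-3),(-15,4)),
    ((-39,0),(-18,-5)),
    ((-36,-6),(-12,8)),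
    ((-36,0),(-12,0)),
    ((-34,0),(-18,-10)),
    ((-34,0),(-18,0)),
    ((-32,-9),(-9,12)),
    ((-32,-3),(-9,4)),
    ((-30,3),(-15,-14)),
    ((-29,0),(-18,-5)),
    ((-28,-6),(-6,8)),
    ((-27,-9),(-9,17)),
    ((-26,0),(-12,-10)),
    ((-26,0),(-12,0)),
    ((-26,6),(-12,-18)),
    ((-22,-9),(-9,12)),
    ((-22,-9),(-9,22)),
    ((-22,-3),(-9,4)),
    ((-22,3),(-9,-14)),
    ((-22,9),(-9,-22)),
    ((-21,0),(-12,-5)),
    ((-18,-6),(-6,8)),
    ((-18,-6),(-6,18)),
    ((-18,0),(-6,0)),
    ((-18,6),(-6,-18)),
    ((-17,-9),(-9,17)),
    ((-17,3),(-9,-9)),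
    ((-17,9),(-9,-17)),
    ((-14,-9),(-3,22)),
    ((-14,-3),(-3,4)),
    ((-13,-6),(-6,13)),
    ((-13,0),(-6,-5)),
    ((-13,6),(-6,-13)),
    ((-12,9),(-9,-22)),
    ((-10,-6),(0,18)),
    ((-9,-3),(-3,9)),
    ((-9,3),(-3,-9)),
    ((-8,0),(-6,0)),
    ((-7,9),(-9,-17)),
    ((-6,-9),(3,22)),
    ((-5,-6),(0,13)),
    ((-4,-3),(-3,4)),
    ((-4,3),(-3,-4)),
    ((-3,6),(-6,-13)),
    ((-2,-6),(6,18)),
    ((-2,9),(-9,-22)),
    ((-1,-3),(3,9)),
    ((1,3),(-3,-9)),
    ((2,-9),(9,22)),
    ((2,6),(-6,-18)),
    ((3,-6),(6,13)),
    ((4,-3),(3,4)),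
    ((4,3),(3,-4)),
    ((5,6),(0,-13)),
    ((6,9),(-3,-22)),
    ((7,-9),(9,17)),
    ((8,0),(6,0)),
    ((9,-3),(3,9)),
    ((9,3),(3,-9)),
    ((10,6),(0,-18)),
    ((12,-9),(9,22)),
    ((13,-6),(6,13)),
    ((13,0),(6,5)),
    ((13,6),(6,-13)),
    ((14,3),(3,-4)),
    ((14,9),(3,-22)),
    ((17,-9),(9,17)),
    ((17,-3),(9,9)),
    ((17,9),(9,-17)),
    ((18,-6),(6,18)),
    ((18,0),(6,0)),
    ((18,6),(6,-18)),
    ((18,6),(6,-8)),
    ((21,0),(12,5)),
    ((22,-9),(9,22)),
    ((22,-3),(9,14)),
    ((22,3),(9,-4)),
    ((22,9),(9,-22)),
    ((22,9),(9,-12)),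
    ((26,-6),(12,18)),
    ((26,0),(12,0)),
    ((26,0),(12,10)),
    ((27,9),(9,-17)),
    ((28,6),(6,-8)),
    ((29,0),(18,5)),
    ((30,-3),(15,14)),
    ((32,3),(9,-4)),
    ((32,9),(9,-12)),
    ((34,0),(18,0)),
    ((34,0),(18,10)),
    ((36,0),(12,0)),
    ((36,6),(12,-8)),
    ((39,0),(18,5)),
    ((40,3),(15,-4)),
    ((44,0),(18,0))]"

definition edges96 :: "(zpoint \<times> zpoint) list" where
  "edges96 = [(((-44,0),(-18,0)),((-40,-3),(-15,4))),
    (((-44,0),(-18,0)),((-39,0),(-18,-5))),
    (((-44,0),(-18,0)),((-36,0),(-12,0))),
    (((-44,0),(-18,0)),((-34,0),(-18,0))),
    (((-40,-3),(-15,4)),((-36,-6),(-12,8))),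
    (((-40,-3),(-15,4)),((-36,0),(-12,0))),
    (((-40,-3),(-15,4)),((-32,-3),(-9,4))),
    (((-39,0),(-18,-5)),((-34,0),(-18,-10))),
    (((-39,0),(-18,-5)),((-34,0),(-18,0))),
    (((-39,0),(-18,-5)),((-29,0),(-18,-5))),
    (((-36,-6),(-12,8)),((-32,-9),(-9,12))),
    (((-36,-6),(-12,8)),((-32,-3),(-9,4))),
    (((-36,-6),(-12,8)),((-28,-6),(-6,8))),
    (((-36,0),(-12,0)),((-32,-3),(-9,4))),
    (((-36,0),(-12,0)),((-26,0),(-12,0))),
    (((-34,0),(-18,-10)),((-30,3),(-15,-14))),
    (((-34,0),(-18,-10)),((-29,0),(-18,-5))),
    (((-34,0),(-18,-10)),((-26,0),(-12,-10))),
    (((-34,0),(-18,0)),((-29,0),(-18,-5))),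
    (((-34,0),(-18,0)),((-26,0),(-12,0))),
    (((-32,-9),(-9,12)),((-28,-6),(-6,8))),
    (((-32,-9),(-9,12)),((-27,-9),(-9,17))),
    (((-32,-9),(-9,12)),((-22,-9),(-9,12))),
    (((-32,-3),(-9,4)),((-28,-6),(-6,8))),
    (((-30,3),(-15,-14)),((-26,0),(-12,-10))),
    (((-30,3),(-15,-14)),((-26,6),(-12,-18))),
    (((-30,3),(-15,-14)),((-22,3),(-9,-14))),
    (((-29,0),(-18,-5)),((-21,0),(-12,-5))),
    (((-28,-6),(-6,8)),((-18,-6),(-6,8))),
    (((-27,-9),(-9,17)),((-22,-9),(-9,12))),
    (((-27,-9),(-9,17)),((-22,-9),(-9,22))),
    (((-27,-9),(-9,17)),((-17,-9),(-9,17))),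
    (((-26,0),(-12,-10)),((-22,3),(-9,-14))),
    (((-26,0),(-12,-10)),((-21,0),(-12,-5))),
    (((-26,0),(-12,0)),((-22,-3),(-9,4))),
    (((-26,0),(-12,0)),((-21,0),(-12,-5))),
    (((-26,6),(-12,-18)),((-22,3),(-9,-14))),
    (((-26,6),(-12,-18)),((-22,9),(-9,-22))),
    (((-26,6),(-12,-18)),((-18,6),(-6,-18))),
    (((-22,-9),(-9,12)),((-18,-6),(-6,8))),
    (((-22,-9),(-9,12)),((-17,-9),(-9,17))),
    (((-22,-9),(-9,22)),((-18,-6),(-6,18))),
    (((-22,-9),(-9,22)),((-17,-9),(-9,17))),
    (((-22,-9),(-9,22)),((-14,-9),(-3,22))),
    (((-22,-3),(-9,4)),((-18,-6),(-6,8))),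
    (((-22,-3),(-9,4)),((-18,0),(-6,0))),
    (((-22,-3),(-9,4)),((-14,-3),(-3,4))),
    (((-22,3),(-9,-14)),((-18,6),(-6,-18))),
    (((-22,9),(-9,-22)),((-18,6),(-6,-18))),
    (((-22,9),(-9,-22)),((-17,9),(-9,-17))),
    (((-22,9),(-9,-22)),((-12,9),(-9,-22))),
    (((-21,0),(-12,-5)),((-17,3),(-9,-9))),
    (((-18,-6),(-6,8)),((-13,-6),(-6,13))),
    (((-18,-6),(-6,18)),((-14,-9),(-3,22))),
    (((-18,-6),(-6,18)),((-13,-6),(-6,13))),
    (((-18,-6),(-6,18)),((-10,-6),(0,18))),
    (((-18,0),(-6,0)),((-14,-3),(-3,4))),
    (((-18,0),(-6,0)),((-13,0),(-6,-5))),
    (((-18,0),(-6,0)),((-8,0),(-6,0))),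
    (((-18,6),(-6,-18)),((-13,6),(-6,-13))),
    (((-17,-9),(-9,17)),((-13,-6),(-6,13))),
    (((-17,3),(-9,-9)),((-13,0),(-6,-5))),
    (((-17,3),(-9,-9)),((-13,6),(-6,-13))),
    (((-17,3),(-9,-9)),((-9,3),(-3,-9))),
    (((-17,9),(-9,-17)),((-13,6),(-6,-13))),
    (((-17,9),(-9,-17)),((-12,9),(-9,-22))),
    (((-17,9),(-9,-17)),((-7,9),(-9,-17))),
    (((-14,-9),(-3,22)),((-10,-6),(0,18))),
    (((-14,-9),(-3,22)),((-6,-9),(3,22))),
    (((-14,-3),(-3,4)),((-9,-3),(-3,9))),
    (((-14,-3),(-3,4)),((-4,-3),(-3,4))),
    (((-13,-6),(-6,13)),((-5,-6),(0,13))),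
    (((-13,0),(-6,-5)),((-9,3),(-3,-9))),
    (((-13,0),(-6,-5)),((-8,0),(-6,0))),
    (((-13,6),(-6,-13)),((-3,6),(-6,-13))),
    (((-12,9),(-9,-22)),((-7,9),(-9,-17))),
    (((-12,9),(-9,-22)),((-2,9),(-9,-22))),
    (((-10,-6),(0,18)),((-6,-9),(3,22))),
    (((-10,-6),(0,18)),((-2,-6),(6,18))),
    (((-9,-3),(-3,9)),((-5,-6),(0,13))),
    (((-9,-3),(-3,9)),((-4,-3),(-3,4))),
    (((-9,-3),(-3,9)),((-1,-3),(3,9))),
    (((-9,3),(-3,-9)),((-4,3),(-3,-4))),
    (((-9,3),(-3,-9)),((1,3),(-3,-9))),
    (((-8,0),(-6,0)),((-4,-3),(-3,4))),
    (((-8,0),(-6,0)),((-4,3),(-3,-4))),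
    (((-7,9),(-9,-17)),((-3,6),(-6,-13))),
    (((-7,9),(-9,-17)),((-2,9),(-9,-22))),
    (((-6,-9),(3,22)),((-2,-6),(6,18))),
    (((-6,-9),(3,22)),((2,-9),(9,22))),
    (((-5,-6),(0,13)),((-1,-3),(3,9))),
    (((-5,-6),(0,13)),((3,-6),(6,13))),
    (((-4,-3),(-3,4)),((4,-3),(3,4))),
    (((-4,3),(-3,-4)),((1,3),(-3,-9))),
    (((-4,3),(-3,-4)),((4,3),(3,-4))),
    (((-3,6),(-6,-13)),((2,6),(-6,-18))),
    (((-3,6),(-6,-13)),((5,6),(0,-13))),
    (((-2,-6),(6,18)),((2,-9),(9,22))),
    (((-2,-6),(6,18)),((3,-6),(6,13))),
    (((-2,9),(-9,-22)),((2,6),(-6,-18))),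
    (((-2,9),(-9,-22)),((6,9),(-3,-22))),
    (((-1,-3),(3,9)),((4,-3),(3,4))),
    (((-1,-3),(3,9)),((9,-3),(3,9))),
    (((1,3),(-3,-9)),((5,6),(0,-13))),
    (((1,3),(-3,-9)),((9,3),(3,-9))),
    (((2,-9),(9,22)),((7,-9),(9,17))),
    (((2,-9),(9,22)),((12,-9),(9,22))),
    (((2,6),(-6,-18)),((6,9),(-3,-22))),
    (((2,6),(-6,-18)),((10,6),(0,-18))),
    (((3,-6),(6,13)),((7,-9),(9,17))),
    (((3,-6),(6,13)),((13,-6),(6,13))),
    (((4,-3),(3,4)),((8,0),(6,0))),
    (((4,-3),(3,4)),((9,-3),(3,9))),
    (((4,3),(3,-4)),((8,0),(6,0))),
    (((4,3),(3,-4)),((9,3),(3,-9))),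
    (((4,3),(3,-4)),((14,3),(3,-4))),
    (((5,6),(0,-13)),((9,3),(3,-9))),
    (((5,6),(0,-13)),((13,6),(6,-13))),
    (((6,9),(-3,-22)),((10,6),(0,-18))),
    (((6,9),(-3,-22)),((14,9),(3,-22))),
    (((7,-9),(9,17)),((12,-9),(9,22))),
    (((7,-9),(9,17)),((17,-9),(9,17))),
    (((8,0),(6,0)),((13,0),(6,5))),
    (((8,0),(6,0)),((18,0),(6,0))),
    (((9,-3),(3,9)),((13,0),(6,5))),
    (((9,-3),(3,9)),((17,-3),(9,9))),
    (((9,3),(3,-9)),((14,3),(3,-4))),
    (((10,6),(0,-18)),((14,9),(3,-22))),
    (((10,6),(0,-18)),((18,6),(6,-18))),
    (((12,-9),(9,22)),((17,-9),(9,17))),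
    (((12,-9),(9,22)),((22,-9),(9,22))),
    (((13,-6),(6,13)),((17,-9),(9,17))),
    (((13,-6),(6,13)),((17,-3),(9,9))),
    (((13,-6),(6,13)),((18,-6),(6,18))),
    (((13,0),(6,5)),((17,-3),(9,9))),
    (((13,0),(6,5)),((18,0),(6,0))),
    (((13,6),(6,-13)),((17,9),(9,-17))),
    (((13,6),(6,-13)),((18,6),(6,-18))),
    (((13,6),(6,-13)),((18,6),(6,-8))),
    (((14,3),(3,-4)),((18,0),(6,0))),
    (((14,3),(3,-4)),((22,3),(9,-4))),
    (((14,9),(3,-22)),((18,6),(6,-18))),
    (((14,9),(3,-22)),((22,9),(9,-22))),
    (((17,-9),(9,17)),((22,-9),(9,22))),
    (((17,-3),(9,9)),((21,0),(12,5))),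
    (((17,9),(9,-17)),((22,9),(9,-22))),
    (((17,9),(9,-17)),((22,9),(9,-12))),
    (((17,9),(9,-17)),((27,9),(9,-17))),
    (((18,-6),(6,18)),((22,-9),(9,22))),
    (((18,-6),(6,18)),((22,-3),(9,14))),
    (((18,-6),(6,18)),((26,-6),(12,18))),
    (((18,0),(6,0)),((22,3),(9,-4))),
    (((18,6),(6,-18)),((22,9),(9,-22))),
    (((18,6),(6,-8)),((22,3),(9,-4))),
    (((18,6),(6,-8)),((22,9),(9,-12))),
    (((18,6),(6,-8)),((28,6),(6,-8))),
    (((21,0),(12,5)),((26,0),(12,0))),
    (((21,0),(12,5)),((26,0),(12,10))),
    (((21,0),(12,5)),((29,0),(18,5))),
    (((22,-9),(9,22)),((26,-6),(12,18))),
    (((22,-3),(9,14)),((26,-6),(12,18))),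
    (((22,-3),(9,14)),((26,0),(12,10))),
    (((22,-3),(9,14)),((30,-3),(15,14))),
    (((22,3),(9,-4)),((26,0),(12,0))),
    (((22,9),(9,-22)),((27,9),(9,-17))),
    (((22,9),(9,-12)),((27,9),(9,-17))),
    (((22,9),(9,-12)),((32,9),(9,-12))),
    (((26,-6),(12,18)),((30,-3),(15,14))),
    (((26,0),(12,0)),((34,0),(18,0))),
    (((26,0),(12,0)),((36,0),(12,0))),
    (((26,0),(12,10)),((30,-3),(15,14))),
    (((26,0),(12,10)),((34,0),(18,10))),
    (((27,9),(9,-17)),((32,9),(9,-12))),
    (((28,6),(6,-8)),((32,3),(9,-4))),
    (((28,6),(6,-8)),((32,9),(9,-12))),
    (((28,6),(6,-8)),((36,6),(12,-8))),
    (((29,0),(18,5)),((34,0),(18,0))),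
    (((29,0),(18,5)),((34,0),(18,10))),
    (((29,0),(18,5)),((39,0),(18,5))),
    (((30,-3),(15,14)),((34,0),(18,10))),
    (((32,3),(9,-4)),((36,0),(12,0))),
    (((32,3),(9,-4)),((36,6),(12,-8))),
    (((32,3),(9,-4)),((40,3),(15,-4))),
    (((32,9),(9,-12)),((36,6),(12,-8))),
    (((34,0),(18,0)),((39,0),(18,5))),
    (((34,0),(18,0)),((44,0),(18,0))),
    (((34,0),(18,10)),((39,0),(18,5))),
    (((36,0),(12,0)),((40,3),(15,-4))),
    (((36,0),(12,0)),((44,0),(18,0))),
    (((36,6),(12,-8)),((40,3),(15,-4))),
    (((39,0),(18,5)),((44,0),(18,0))),
    (((40,3),(15,-4)),((44,0),(18,0)))]"

lemma matchstick_certificate94: "matchstick_certificate vertices94 edges94"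
  by code_simp

lemma matchstick_certificate95: "matchstick_certificate vertices95 edges95"
  by code_simp

lemma matchstick_certificate96: "matchstick_certificate vertices96 edges96"
  by code_simp

theorem theorem5p1:
  fixes n :: nat
  assumes "n \<in> {94, 95, 96}"
  shows "\<exists>V E. four_regular_matchstick_graph V E \<and> card V = n"
proof -
  have "length vertices94 = 94" and "length vertices95 = 95" and "length vertices96 = 96"
    by (simp_all add: vertices94_def vertices95_def vertices96_def)
  then show ?thesis
    using assms four_regular_matchstick_graph_of_certificate [OF matchstick_certificate94]
      four_regular_matchstick_graph_of_certificate [OF matchstick_certificate95]
      four_regular_matchstick_graph_of_certificate [OF matchstick_certificate96]
    by auto
qed

end
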